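(* Let $m$ be any even number of machines and consider any distributed optimization algorithm satisfying Assumption 1 (non-smooth version). Let $\lambda\ge0$. Then, for $d$ sufficiently large, there exist two convex functions $F_1,F_2$ on the unit Euclidean ball $\{\mathbf w\in\mathbb R^d:\|\mathbf w\|\le1\}$ with the following properties: - each is $\lambda$-strongly convex and $(1+\lambda)$-Lipschitz; - if $m/2$ machines hold $F_1$ and $m/2$ hold $F_2$, set $F=\frac12(F_1+F_2)$ and $\mathbf w^*=\arg\min_{\|\mathbf w\|\le1}F(\mathbf w)$. Then, for every sufficiently small $\epsilon>0$, the number of communication rounds required to obtain $\hat{\mathbf w}$ with $F(\hat{\mathbf w})-F(\mathbf w^* )\le\epsilon$ is at least $\frac{1}{8\epsilon}-2$ if $\lambda=0$, and at least $\sqrt{\frac{1}{16\lambda\epsilon}}-2$ if $\lambda>0$.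
   Context: Distributed model: there are $m$ machines; machine $i$ holds a convex function $F_i$, and the goal is to minimize the average $F=\frac1m\sum_iF_i$. The algorithm proceeds in rounds. In each round every machine performs arbitrary (unbounded) local computation. This is followed by a communication round in which each machine broadcasts a message to all other machines. After the last communication round, a designated machine outputs a point $\hat{\mathbf w}$. Assumption 1 (non-smooth version): Each machine $j$ maintains a set $W_j\subset\mathbb R^d$, initially $W_j=\{\mathbf 0\}$. Between communication rounds, machine $j$ may iteratively add to $W_j$ finitely many points $\mathbf w$. Each such point must satisfy, for some subgradient $\mathbf g\in\partial F_j(\mathbf w)$ and some $\gamma,\nu\ge0$ with $\gamma+\nu>0$, $$\gamma\mathbf w+\nu\mathbf g\in\operatorname{span}\{\mathbf w',\ \mathbf g',\ (\nabla^2F_j(\mathbf w')+D)\mathbf w'',\ (\nabla^2F_j(\mathbf w')+D)^{-1}\mathbf w''\},$$ where the span ranges over $\mathbf w',\mathbf w''\in W_j$, subgradients $\mathbf g'\in\partial F_j(\mathbf w')$, and diagonal matrices $D$ such that $\nabla^2F_j(\mathbf w')$ and $(\nabla^2F_j(\mathbf w')+D)^{-1}$ exist. After every communication round, every $W_j$ is replaced by $\bigcup_{i=1}^mW_i$. The final output of the designated machine $j$ is a point in $\operatorname{span}W_j$. *)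

theory Defs
  imports Complex_Main
begin

text \<open>Vectors of R^d are represented as functions nat => real vanishing at
  indices >= d; d x d matrices as nat => nat => real vanishing outside d x d.\<close>

type_synonym vec = "nat \<Rightarrow> real"
type_synonym mat = "nat \<Rightarrow> nat \<Rightarrow> real"

definition Rd :: "nat \<Rightarrow> vec set" where
  "Rd d = {x. \<forall>i. d \<le> i \<longrightarrow> x i = 0}"

definition ipd :: "nat \<Rightarrow> vec \<Rightarrow> vec \<Rightarrow> real" where
  "ipd d x y = (\<Sum>i<d. x i * y i)"

definition nrmd :: "nat \<Rightarrow> vec \<Rightarrow> real" where
  "nrmd d x = sqrt (ipd d x x)"

definition vsub :: "vec \<Rightarrow> vec \<Rightarrow> vec" where
  "vsub x y = (\<lambda>i. x i - y i)"

definition Bd :: "nat \<Rightarrow> vec set" where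
  "Bd d = {x \<in> Rd d. nrmd d x \<le> 1}"

definition strongly_convex_on_ball :: "nat \<Rightarrow> real \<Rightarrow> (vec \<Rightarrow> real) \<Rightarrow> bool" where
  "strongly_convex_on_ball d lam F \<longleftrightarrow>
     (\<forall>x\<in>Bd d. \<forall>y\<in>Bd d. \<forall>t::real. 0 \<le> t \<and> t \<le> 1 \<longrightarrow>
        F (\<lambda>i. t * x i + (1 - t) * y i)
          \<le> t * F x + (1 - t) * F y - lam / 2 * t * (1 - t) * (nrmd d (vsub x y))\<^sup>2)"

definition lipschitz_on_ball :: "nat \<Rightarrow> real \<Rightarrow> (vec \<Rightarrow> real) \<Rightarrow> bool" where
  "lipschitz_on_ball d L F \<longleftrightarrow>
     (\<forall>x\<in>Bd d. \<forall>y\<in>Bd d. \<bar>F x - F y\<bar> \<le> L * nrmd d (vsub x y))"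

definition subgrad :: "nat \<Rightarrow> (vec \<Rightarrow> real) \<Rightarrow> vec \<Rightarrow> vec \<Rightarrow> bool" where
  "subgrad d F w g \<longleftrightarrow> w \<in> Bd d \<and> g \<in> Rd d \<and>
     (\<forall>v\<in>Bd d. F w + ipd d g (vsub v w) \<le> F v)"

definition has_grad_at :: "nat \<Rightarrow> (vec \<Rightarrow> real) \<Rightarrow> vec \<Rightarrow> vec \<Rightarrow> bool" where
  "has_grad_at d F w g \<longleftrightarrow> w \<in> Bd d \<and> g \<in> Rd d \<and>
     (\<forall>e>0. \<exists>\<delta>>0. \<forall>v\<in>Bd d. nrmd d (vsub v w) < \<delta> \<longrightarrow>
        \<bar>F v - F w - ipd d g (vsub v w)\<bar> \<le> e * nrmd d (vsub v w))"

definition Md :: "nat \<Rightarrow> mat set" where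
  "Md d = {A. \<forall>i k. d \<le> i \<or> d \<le> k \<longrightarrow> A i k = 0}"

definition mv :: "nat \<Rightarrow> mat \<Rightarrow> vec \<Rightarrow> vec" where
  "mv d A x = (\<lambda>i. if i < d then (\<Sum>k<d. A i k * x k) else 0)"

definition madd :: "mat \<Rightarrow> mat \<Rightarrow> mat" where
  "madd A B = (\<lambda>i k. A i k + B i k)"

definition hessian_at :: "nat \<Rightarrow> (vec \<Rightarrow> real) \<Rightarrow> vec \<Rightarrow> mat \<Rightarrow> bool" where
  "hessian_at d F w H \<longleftrightarrow> w \<in> Bd d \<and> H \<in> Md d \<and>
     (\<exists>G r. r > 0 \<and>
        (\<forall>v\<in>Bd d. nrmd d (vsub v w) < r \<longrightarrow> has_grad_at d F v (G v)) \<and>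
        (\<forall>e>0. \<exists>\<delta>>0. \<forall>v\<in>Bd d. nrmd d (vsub v w) < \<delta> \<longrightarrow>
           nrmd d (\<lambda>i. G v i - G w i - mv d H (vsub v w) i) \<le> e * nrmd d (vsub v w)))"

definition diag_mat :: "nat \<Rightarrow> mat \<Rightarrow> bool" where
  "diag_mat d D \<longleftrightarrow> D \<in> Md d \<and> (\<forall>i k. i \<noteq> k \<longrightarrow> D i k = 0)"

definition inverse_mat :: "nat \<Rightarrow> mat \<Rightarrow> mat \<Rightarrow> bool" where
  "inverse_mat d A B \<longleftrightarrow> B \<in> Md d \<and>
     (\<forall>i<d. \<forall>k<d. (\<Sum>l<d. A i l * B l k) = (if i = k then 1 else 0)
                 \<and> (\<Sum>l<d. B i l * A l k) = (if i = k then 1 else 0))"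

text \<open>Linear span (finite linear combinations; span of {} is {0}).\<close>
definition lin_span :: "vec set \<Rightarrow> vec set" where
  "lin_span S = {v. \<exists>T c. finite T \<and> T \<subseteq> S \<and> v = (\<lambda>i. \<Sum>u\<in>T. c u * u i)}"

text \<open>Generators of the span in Assumption 1, for machine function F and set W.\<close>
definition gens :: "nat \<Rightarrow> (vec \<Rightarrow> real) \<Rightarrow> vec set \<Rightarrow> vec set" where
  "gens d F W =
     W \<union> {g. \<exists>w'\<in>W. subgrad d F w' g}
       \<union> {mv d (madd H D) w'' | w' w'' H D B. w' \<in> W \<and> w'' \<in> W \<and> hessian_at d F w' H
             \<and> diag_mat d D \<and> inverse_mat d (madd H D) B}
       \<union> {mv d B w'' | w' w'' H D B. w' \<in> W \<and> w'' \<in> W \<and> hessian_at d F w' H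
             \<and> diag_mat d D \<and> inverse_mat d (madd H D) B}"

definition valid_add :: "nat \<Rightarrow> (vec \<Rightarrow> real) \<Rightarrow> vec set \<Rightarrow> vec \<Rightarrow> bool" where
  "valid_add d F W w \<longleftrightarrow> (\<exists>g \<gamma> \<nu>. subgrad d F w g \<and> \<gamma> \<ge> 0 \<and> \<nu> \<ge> 0 \<and> \<gamma> + \<nu> > 0 \<and>
      (\<lambda>i. \<gamma> * w i + \<nu> * g i) \<in> lin_span (gens d F W))"

text \<open>Local computation between communication rounds: finitely many points
  added one after another.\<close>
definition local_ext :: "nat \<Rightarrow> (vec \<Rightarrow> real) \<Rightarrow> vec set \<Rightarrow> vec set \<Rightarrow> bool" where
  "local_ext d F W W' \<longleftrightarrow> (\<exists>ws. W' = W \<union> set ws \<and>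
      (\<forall>k<length ws. valid_add d F (W \<union> set (take k ws)) (ws ! k)))"

text \<open>Ws t j = the set W_j after t communication rounds (m machines,
  machine j holds Fs j), for a run with T rounds.\<close>
definition is_run :: "nat \<Rightarrow> nat \<Rightarrow> (nat \<Rightarrow> vec \<Rightarrow> real) \<Rightarrow> nat \<Rightarrow> (nat \<Rightarrow> nat \<Rightarrow> vec set) \<Rightarrow> bool" where
  "is_run d m Fs T Ws \<longleftrightarrow> (\<forall>j<m. Ws 0 j = {(\<lambda>_. 0)}) \<and>
     (\<forall>t<T. \<exists>V. (\<forall>j<m. local_ext d (Fs j) (Ws t j) (V j)) \<and>
                 (\<forall>j<m. Ws (Suc t) j = (\<Union>i<m. V i)))"

text \<open>A distributed algorithm for m machines with designated output machine j0:
  given the dimension d, the local functions and the number of rounds T, it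
  produces a run (the sets W_j) and an output point. Assumption 1 demands that
  every run obeys the rules and the output lies in span W_j0 after round T.\<close>
type_synonym algorithm =
  "nat \<Rightarrow> (nat \<Rightarrow> vec \<Rightarrow> real) \<Rightarrow> nat \<Rightarrow> (nat \<Rightarrow> nat \<Rightarrow> vec set) \<times> vec"

definition valid_algorithm :: "nat \<Rightarrow> nat \<Rightarrow> algorithm \<Rightarrow> bool" where
  "valid_algorithm m j0 alg \<longleftrightarrow> j0 < m \<and>
     (\<forall>d Fs T. is_run d m Fs T (fst (alg d Fs T)) \<and>
        snd (alg d Fs T) \<in> lin_span (fst (alg d Fs T) T j0))"

end

theory Submission
  imports Defs "HOL-Analysis.L2_Norm" "HOL-Library.Countable"
begin

text \<open>
  Machine \<open>j\<close> holds \<open>F p\<close>, where \<open>p\<close> is a parity and \<open>F p\<close> consists of a strongly convex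
  quadratic, a linear reward \<open>- \<alpha> w\<^sub>0\<close>, and smoothed absolute values of the differences
  \<open>w\<^sub>i - w\<^sub>i\<^sub>+\<^sub>1\<close> for the links \<open>i < N\<close> of parity \<open>p\<close> only. A tiny nowhere twice differentiable
  term in \<open>w\<^sub>0\<close> makes the Hessian-based operations of Assumption 1 unavailable. If all points
  known to a machine vanish from coordinate \<open>K\<close> on and the chain of \<open>F p\<close> has no link
  between \<open>K - 1\<close> and \<open>K\<close>, then so do all subgradients and all points the machine may add.
  Hence every communication round extends the support by at most one coordinate. The average
  \<open>(F 0 + F 1) / 2\<close> carries the full chain, and every point with \<open>w\<^sub>N = 0\<close> is worse by more
  than \<open>\<epsilon>\<close> than the plateau \<open>(c, \<dots>, c, 0, \<dots>)\<close> of length \<open>N + 1\<close>; choosing \<open>N\<close> as large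
  as the claimed bound allows then forces at least \<open>N\<close> rounds.
\<close>

section \<open>A convex Lipschitz function with a dense set of kinks\<close>

definition kink_at :: "nat \<Rightarrow> real" where
  "kink_at n = max (-1) (min 1 (real_of_rat (from_nat n)))"

definition kink_weight :: "nat \<Rightarrow> real" where
  "kink_weight n = (1/2) ^ Suc n"

definition kinked :: "real \<Rightarrow> real" where
  "kinked x = (\<Sum>n. kink_weight n * \<bar>x - kink_at n\<bar>)"

lemma abs_kink_at_le: "\<bar>kink_at n\<bar> \<le> 1"
  by (simp add: kink_at_def)

lemma kink_weight_pos: "0 < kink_weight n"
  by (simp add: kink_weight_def)

lemma kink_weight_sums: "kink_weight sums 1"
proof -
  have "(\<lambda>n. (1/2::real) ^ n) sums 2"
    using geometric_sums[of "1/2::real"] by simp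
  then have "(\<lambda>n. 1/2 * (1/2::real) ^ n) sums (1/2 * 2)"
    by (rule sums_mult)
  then show ?thesis
    unfolding kink_weight_def by simp
qed

lemma kinked_sums: "(\<lambda>n. kink_weight n * \<bar>x - kink_at n\<bar>) sums kinked x"
proof -
  have "summable (\<lambda>n. kink_weight n * \<bar>x - kink_at n\<bar>)"
  proof (rule summable_comparison_test)
    show "\<exists>N. \<forall>n\<ge>N. norm (kink_weight n * \<bar>x - kink_at n\<bar>) \<le> (\<bar>x\<bar> + 1) * kink_weight n"
    proof (intro exI allI impI)
      fix n :: nat
      have "\<bar>x - kink_at n\<bar> \<le> \<bar>x\<bar> + 1"
        using abs_kink_at_le[of n] by linarith
      then show "norm (kink_weight n * \<bar>x - kink_at n\<bar>) \<le> (\<bar>x\<bar> + 1) * kink_weight n"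
        using kink_weight_pos[of n] by (simp add: mult.commute mult_left_mono)
    qed
    show "summable (\<lambda>n. (\<bar>x\<bar> + 1) * kink_weight n)"
      using kink_weight_sums sums_summable summable_mult by blast
  qed
  then show ?thesis
    unfolding kinked_def by (rule summable_sums)
qed

lemma kinked_lipschitz: "\<bar>kinked x - kinked y\<bar> \<le> \<bar>x - y\<bar>"
proof -
  have "kinked x \<le> kinked y + \<bar>x - y\<bar>" for x y
  proof -
    have le: "kink_weight n * \<bar>x - kink_at n\<bar> \<le> kink_weight n * \<bar>y - kink_at n\<bar> + \<bar>x - y\<bar> * kink_weight n" for n
      using kink_weight_pos[of n] mult_left_mono[of "\<bar>x - kink_at n\<bar>" "\<bar>y - kink_at n\<bar> + \<bar>x - y\<bar>"]
      by (simp add: algebra_simps)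
    have "(\<lambda>n. kink_weight n * \<bar>y - kink_at n\<bar> + \<bar>x - y\<bar> * kink_weight n) sums (kinked y + \<bar>x - y\<bar> * 1)"
      by (intro sums_add sums_mult kinked_sums kink_weight_sums)
    from sums_le[OF le kinked_sums this] show ?thesis
      by simp
  qed
  from this[of x y] this[of y x] show ?thesis
    by (simp add: abs_minus_commute abs_le_iff)
qed

lemma kinked_convex:
  assumes "0 \<le> t" "t \<le> 1"
  shows "kinked (t * x + (1 - t) * y) \<le> t * kinked x + (1 - t) * kinked y"
proof -
  have le: "kink_weight n * \<bar>t * x + (1 - t) * y - kink_at n\<bar>
          \<le> t * (kink_weight n * \<bar>x - kink_at n\<bar>) + (1 - t) * (kink_weight n * \<bar>y - kink_at n\<bar>)" for n
  proof -
    have "\<bar>t * x + (1 - t) * y - kink_at n\<bar> = \<bar>t * (x - kink_at n) + (1 - t) * (y - kink_at n)\<bar>"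
      by (simp add: algebra_simps)
    also have "\<dots> \<le> \<bar>t * (x - kink_at n)\<bar> + \<bar>(1 - t) * (y - kink_at n)\<bar>"
      by (rule abs_triangle_ineq)
    also have "\<dots> = t * \<bar>x - kink_at n\<bar> + (1 - t) * \<bar>y - kink_at n\<bar>"
      using assms by (simp add: abs_mult)
    finally have "kink_weight n * \<bar>t * x + (1 - t) * y - kink_at n\<bar>
        \<le> kink_weight n * (t * \<bar>x - kink_at n\<bar> + (1 - t) * \<bar>y - kink_at n\<bar>)"
      using kink_weight_pos[of n] by (intro mult_left_mono) auto
    then show ?thesis
      by (simp add: algebra_simps)
  qed
  have "(\<lambda>n. t * (kink_weight n * \<bar>x - kink_at n\<bar>) + (1 - t) * (kink_weight n * \<bar>y - kink_at n\<bar>))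
          sums (t * kinked x + (1 - t) * kinked y)"
    by (intro sums_add sums_mult kinked_sums)
  from sums_le[OF le kinked_sums this] show ?thesis .
qed

text \<open>Only the \<open>n\<close>-th summand is not affine near \<open>kink_at n\<close>, and the others have
  nonnegative second differences.\<close>
lemma kinked_second_difference:
  assumes "0 \<le> t"
  shows "2 * t * kink_weight n \<le> kinked (kink_at n + t) + kinked (kink_at n - t) - 2 * kinked (kink_at n)"
proof -
  define x where "x = kink_at n"
  define h where "h k = kink_weight k * \<bar>x + t - kink_at k\<bar> + kink_weight k * \<bar>x - t - kink_at k\<bar>
                        - 2 * (kink_weight k * \<bar>x - kink_at k\<bar>)" for k
  have h_sums: "h sums (kinked (x + t) + kinked (x - t) - 2 * kinked x)"
    unfolding h_def by (intro sums_add sums_diff sums_mult kinked_sums)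
  have "0 \<le> h k" for k
  proof -
    have "2 * \<bar>x - kink_at k\<bar> \<le> \<bar>x + t - kink_at k\<bar> + \<bar>x - t - kink_at k\<bar>"
      by (simp add: abs_if)
    then have "0 \<le> kink_weight k * (\<bar>x + t - kink_at k\<bar> + \<bar>x - t - kink_at k\<bar> - 2 * \<bar>x - kink_at k\<bar>)"
      using kink_weight_pos[of k] by simp
    then show ?thesis
      unfolding h_def by (simp add: algebra_simps)
  qed
  then have "h n \<le> kinked (x + t) + kinked (x - t) - 2 * kinked x"
    using sum_le_suminf[OF sums_summable[OF h_sums], of "{n}"] sums_unique[OF h_sums] by simp
  moreover have "h n = 2 * t * kink_weight n"
    unfolding h_def x_def using assms by simp
  ultimately show ?thesis
    unfolding x_def by simp
qed

lemma kink_at_dense: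
  assumes "\<bar>x\<bar> \<le> 1" "0 < \<rho>"
  obtains n where "\<bar>kink_at n - x\<bar> < \<rho>"
proof -
  have "max (-1) (x - \<rho>) < min 1 (x + \<rho>)"
    using assms by auto
  then obtain q where q: "q \<in> \<rat>" "max (-1) (x - \<rho>) < q" "q < min 1 (x + \<rho>)"
    using Rats_dense_in_real by blast
  then obtain r where r: "q = real_of_rat r"
    by (auto simp: Rats_def)
  have "kink_at (to_nat r) = q"
    using q r by (simp add: kink_at_def)
  with q show ?thesis
    by (intro that[of "to_nat r"]) auto
qed

section \<open>The pseudo-Huber function\<close>

definition pseudo_huber :: "real \<Rightarrow> real \<Rightarrow> real" where
  "pseudo_huber \<delta> x = sqrt (x\<^sup>2 + \<delta>\<^sup>2) - \<delta>"

lemma sqrt_sum_squares_eq_cmod: "sqrt (x\<^sup>2 + \<delta>\<^sup>2) = cmod (Complex x \<delta>)"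
  by (simp add: cmod_def)

lemma pseudo_huber_convex:
  assumes "0 \<le> t" "t \<le> 1"
  shows "pseudo_huber \<delta> (t * a + (1 - t) * b) \<le> t * pseudo_huber \<delta> a + (1 - t) * pseudo_huber \<delta> b"
proof -
  have "Complex (t * a + (1 - t) * b) \<delta> = of_real t * Complex a \<delta> + of_real (1 - t) * Complex b \<delta>"
    by (simp add: complex_eq_iff algebra_simps)
  then have "cmod (Complex (t * a + (1 - t) * b) \<delta>)
               \<le> cmod (of_real t * Complex a \<delta>) + cmod (of_real (1 - t) * Complex b \<delta>)"
    by (simp add: norm_triangle_ineq)
  also have "\<dots> = t * cmod (Complex a \<delta>) + (1 - t) * cmod (Complex b \<delta>)"
    using assms by (simp only: norm_mult norm_of_real)
  finally show ?thesis
    unfolding pseudo_huber_def sqrt_sum_squares_eq_cmod by (simp add: algebra_simps)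
qed

lemma pseudo_huber_lipschitz: "\<bar>pseudo_huber \<delta> a - pseudo_huber \<delta> b\<bar> \<le> \<bar>a - b\<bar>"
  using norm_triangle_ineq3[of "Complex a \<delta>" "Complex b \<delta>"]
  unfolding pseudo_huber_def sqrt_sum_squares_eq_cmod by (simp add: cmod_def)

lemma abs_minus_le_pseudo_huber: "\<bar>a\<bar> - \<delta> \<le> pseudo_huber \<delta> a"
  using real_sqrt_le_mono[of "a\<^sup>2" "a\<^sup>2 + \<delta>\<^sup>2"] by (simp add: pseudo_huber_def)

lemma pseudo_huber_nonneg: "0 \<le> \<delta> \<Longrightarrow> 0 \<le> pseudo_huber \<delta> a"
  using real_sqrt_le_mono[of "\<delta>\<^sup>2" "a\<^sup>2 + \<delta>\<^sup>2"] by (simp add: pseudo_huber_def)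

lemma pseudo_huber_0: "0 \<le> \<delta> \<Longrightarrow> pseudo_huber \<delta> 0 = 0"
  by (simp add: pseudo_huber_def)

lemma pseudo_huber_le_quadratic:
  assumes "0 < \<delta>"
  shows "pseudo_huber \<delta> a \<le> a\<^sup>2 / (2 * \<delta>)"
proof -
  have "(\<delta> + a\<^sup>2 / (2 * \<delta>))\<^sup>2 = a\<^sup>2 + \<delta>\<^sup>2 + (a\<^sup>2 / (2 * \<delta>))\<^sup>2"
    using assms by (simp add: power2_eq_square field_simps)
  then have "a\<^sup>2 + \<delta>\<^sup>2 \<le> (\<delta> + a\<^sup>2 / (2 * \<delta>))\<^sup>2"
    by simp
  then have "sqrt (a\<^sup>2 + \<delta>\<^sup>2) \<le> \<delta> + a\<^sup>2 / (2 * \<delta>)"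
    using assms by (intro real_le_lsqrt) auto
  then show ?thesis
    unfolding pseudo_huber_def by simp
qed

section \<open>Coordinates, norms and prefix subspaces\<close>

definition sqnorm :: "nat \<Rightarrow> vec \<Rightarrow> real" where
  "sqnorm d w = (\<Sum>i<d. (w i)\<^sup>2)"

definition vanishing_from :: "nat \<Rightarrow> vec set" where
  "vanishing_from K = {x. \<forall>i\<ge>K. x i = 0}"

lemma sqnorm_nonneg: "0 \<le> sqnorm d w"
  unfolding sqnorm_def by (intro sum_nonneg) simp

lemma nrmd_eq_sqrt_sqnorm: "nrmd d x = sqrt (sqnorm d x)"
  unfolding nrmd_def ipd_def sqnorm_def by (simp add: power2_eq_square)

lemma nrmd_power2: "(nrmd d x)\<^sup>2 = sqnorm d x"
  unfolding nrmd_eq_sqrt_sqnorm by (simp add: sqnorm_nonneg)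

lemma nrmd_nonneg: "0 \<le> nrmd d x"
  unfolding nrmd_eq_sqrt_sqnorm by (simp add: sqnorm_nonneg)

lemma nrmd_eq_L2_set: "nrmd d x = L2_set x {..<d}"
  unfolding nrmd_eq_sqrt_sqnorm sqnorm_def L2_set_def by simp

lemma sqnorm_le_1_if_Bd: "x \<in> Bd d \<Longrightarrow> sqnorm d x \<le> 1"
  unfolding Bd_def nrmd_eq_sqrt_sqnorm by simp

lemma abs_coord_le_nrmd:
  assumes "i < d"
  shows "\<bar>x i\<bar> \<le> nrmd d x"
proof -
  have "(x i)\<^sup>2 \<le> sqnorm d x"
    unfolding sqnorm_def using assms by (intro member_le_sum) auto
  then show ?thesis
    unfolding nrmd_eq_sqrt_sqnorm using real_sqrt_le_mono real_sqrt_abs by metis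
qed

lemma nrmd_triangle: "nrmd d (\<lambda>i. a i + b i) \<le> nrmd d a + nrmd d b"
  unfolding nrmd_eq_L2_set by (rule L2_set_triangle_ineq)

lemma nrmd_vsub_triangle: "nrmd d (vsub a c) \<le> nrmd d (vsub a b) + nrmd d (vsub b c)"
  using nrmd_triangle[of d "vsub a b" "vsub b c"] by (simp add: vsub_def)

lemma sqnorm_scale: "sqnorm d (\<lambda>i. c * x i) = c\<^sup>2 * sqnorm d x"
  unfolding sqnorm_def by (simp add: power_mult_distrib sum_distrib_left)

lemma nrmd_scale: "nrmd d (\<lambda>i. c * x i) = \<bar>c\<bar> * nrmd d x"
  unfolding nrmd_eq_sqrt_sqnorm sqnorm_scale by (simp add: real_sqrt_mult)

lemma sqnorm_convex_comb:
  "sqnorm d (\<lambda>i. t * x i + (1 - t) * y i)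
     = t * sqnorm d x + (1 - t) * sqnorm d y - t * (1 - t) * sqnorm d (vsub x y)"
proof -
  have "(t * x i + (1 - t) * y i)\<^sup>2 = t * (x i)\<^sup>2 + (1 - t) * (y i)\<^sup>2 - t * (1 - t) * (vsub x y i)\<^sup>2" for i
    unfolding vsub_def by (simp add: power2_eq_square algebra_simps)
  then show ?thesis
    unfolding sqnorm_def by (simp add: sum.distrib sum_subtractf sum_distrib_left)
qed

lemma sqnorm_lipschitz:
  assumes "x \<in> Bd d" "y \<in> Bd d"
  shows "\<bar>sqnorm d x - sqnorm d y\<bar> \<le> 2 * nrmd d (vsub x y)"
proof -
  have "\<bar>sqnorm d x - sqnorm d y\<bar> = \<bar>\<Sum>i<d. (x i - y i) * (x i + y i)\<bar>"
    unfolding sqnorm_def by (simp add: sum_subtractf[symmetric] power2_eq_square algebra_simps)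
  also have "\<dots> \<le> (\<Sum>i<d. \<bar>x i - y i\<bar> * \<bar>x i + y i\<bar>)"
    by (simp add: abs_mult[symmetric])
  also have "\<dots> \<le> L2_set (\<lambda>i. x i - y i) {..<d} * L2_set (\<lambda>i. x i + y i) {..<d}"
    by (rule L2_set_mult_ineq)
  also have "\<dots> \<le> nrmd d (vsub x y) * 2"
  proof (rule mult_mono)
    have "L2_set (\<lambda>i. x i + y i) {..<d} \<le> L2_set x {..<d} + L2_set y {..<d}"
      by (rule L2_set_triangle_ineq)
    then show "L2_set (\<lambda>i. x i + y i) {..<d} \<le> 2"
      using assms unfolding Bd_def by (simp add: nrmd_eq_L2_set[symmetric])
  qed (simp_all add: nrmd_eq_L2_set vsub_def nrmd_nonneg)
  finally show ?thesis
    by simp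
qed

lemma sum_abs_le_nrmd:
  assumes "N < d"
  shows "(\<Sum>i\<le>N. \<bar>z i\<bar>) \<le> sqrt (real N + 1) * nrmd d z"
proof -
  have "(\<Sum>i\<le>N. \<bar>z i\<bar>) \<le> L2_set z {..N} * sqrt (real N + 1)"
    using L2_set_mult_ineq[of z "\<lambda>_. 1::real" "{..N}"] by (simp add: L2_set_def add.commute)
  also have "\<dots> \<le> nrmd d z * sqrt (real N + 1)"
  proof (rule mult_right_mono)
    have "(\<Sum>i\<le>N. (z i)\<^sup>2) \<le> (\<Sum>i<d. (z i)\<^sup>2)"
      using assms by (intro sum_mono2) auto
    then show "L2_set z {..N} \<le> nrmd d z"
      unfolding L2_set_def nrmd_eq_sqrt_sqnorm sqnorm_def by simp
  qed simp
  finally show ?thesis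
    by (simp add: mult.commute)
qed

lemma vsub_fun_upd: "vsub (x(j := a)) x = (\<lambda>i. if i = j then a - x j else 0)"
  unfolding vsub_def by auto

lemma sqnorm_fun_upd: "i < d \<Longrightarrow> sqnorm d (x(i := a)) = sqnorm d x - (x i)\<^sup>2 + a\<^sup>2"
  unfolding sqnorm_def by (simp add: sum.remove[of "{..<d}" i])

lemma nrmd_vsub_fun_upd: "j < d \<Longrightarrow> nrmd d (vsub (x(j := a)) x) = \<bar>a - x j\<bar>"
  using sqnorm_fun_upd[of j d "\<lambda>_. 0" "a - x j"]
  unfolding nrmd_eq_sqrt_sqnorm vsub_fun_upd by (simp add: sqnorm_def fun_upd_def)

lemma ipd_vsub_fun_upd: "j < d \<Longrightarrow> ipd d g (vsub (x(j := a)) x) = g j * (a - x j)"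
  unfolding ipd_def vsub_fun_upd by (simp add: if_distrib[of "\<lambda>x. g _ * x"] cong: if_cong)

lemma nrmd_fun_upd_le:
  assumes "j < d"
  shows "nrmd d (x(j := a)) \<le> nrmd d x + \<bar>a - x j\<bar>"
proof -
  have "x(j := a) = (\<lambda>i. x i + vsub (x(j := a)) x i)"
    unfolding vsub_def by auto
  then show ?thesis
    using nrmd_triangle[of d x "vsub (x(j := a)) x"] nrmd_vsub_fun_upd[OF assms] by simp
qed

lemma fun_upd_in_Bd:
  assumes "v \<in> Rd d" "nrmd d v + \<bar>a - v j\<bar> \<le> 1" "j < d"
  shows "v(j := a) \<in> Bd d"
  using assms nrmd_fun_upd_le[OF assms(3), of v a] unfolding Bd_def Rd_def by auto

lemma vanishing_from_mono: "a \<le> b \<Longrightarrow> vanishing_from a \<subseteq> vanishing_from b"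
  unfolding vanishing_from_def by auto

lemma lin_span_vanishing_from: "S \<subseteq> vanishing_from K \<Longrightarrow> lin_span S \<subseteq> vanishing_from K"
  unfolding lin_span_def vanishing_from_def by (auto intro!: sum.neutral)

lemma abs_four_terms_le: "\<bar>a + b - c + e\<bar> \<le> \<bar>a\<bar> + \<bar>b\<bar> + \<bar>c\<bar> + \<bar>e :: real\<bar>"
  using abs_triangle_ineq[of "a + b - c" e] abs_triangle_ineq4[of "a + b" c] abs_triangle_ineq[of a b]
  by linarith

lemma lipschitz_on_ball_mono:
  "L \<le> L' \<Longrightarrow> lipschitz_on_ball d L F \<Longrightarrow> lipschitz_on_ball d L' F"
  unfolding lipschitz_on_ball_def by (meson nrmd_nonneg mult_right_mono order_trans)

section \<open>Chains of pseudo-Huber links\<close>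

definition chain_penalty :: "nat \<Rightarrow> nat \<Rightarrow> real \<Rightarrow> vec \<Rightarrow> real" where
  "chain_penalty p N \<delta> w = (\<Sum>i<N. if i mod 2 = p then pseudo_huber \<delta> (w i - w (Suc i)) else 0)"

text \<open>The link between coordinates \<open>K - 1\<close> and \<open>K\<close> is missing from the chain of parity \<open>p\<close>.\<close>
definition chain_cut :: "nat \<Rightarrow> nat \<Rightarrow> nat \<Rightarrow> bool" where
  "chain_cut N p K \<longleftrightarrow> 1 \<le> K \<and> \<not> ((K - 1) mod 2 = p \<and> K - 1 < N)"

lemma chain_penalty_add: "chain_penalty 0 N \<delta> w + chain_penalty 1 N \<delta> w
    = (\<Sum>i<N. pseudo_huber \<delta> (w i - w (Suc i)))"
  unfolding chain_penalty_def sum.distrib[symmetric] by (intro sum.cong) auto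

lemma chain_penalty_convex:
  assumes "0 \<le> t" "t \<le> 1"
  shows "chain_penalty p N \<delta> (\<lambda>i. t * x i + (1 - t) * y i)
           \<le> t * chain_penalty p N \<delta> x + (1 - t) * chain_penalty p N \<delta> y"
proof -
  have "t * x i + (1 - t) * y i - (t * x (Suc i) + (1 - t) * y (Suc i))
          = t * (x i - x (Suc i)) + (1 - t) * (y i - y (Suc i))" for i
    by (simp add: algebra_simps)
  then show ?thesis
    unfolding chain_penalty_def sum_distrib_left sum.distrib[symmetric]
    using pseudo_huber_convex[OF assms] by (intro sum_mono) simp
qed

lemma sum_alternate_pairs_le:
  fixes z :: "nat \<Rightarrow> real"
  assumes "p < 2" "\<And>i. 0 \<le> z i"
  shows "(\<Sum>i<N. if i mod 2 = p then z i + z (Suc i) else 0) \<le> (\<Sum>i\<le>N. z i)"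
proof -
  have "(\<Sum>i<N. if i mod 2 = p then z i + z (Suc i) else 0) + (if N mod 2 = p then z N else 0)
          \<le> (\<Sum>i\<le>N. z i)"
  proof (induction N)
    case (Suc N)
    have "(\<Sum>i<Suc N. if i mod 2 = p then z i + z (Suc i) else 0) + (if Suc N mod 2 = p then z (Suc N) else 0)
        = (\<Sum>i<N. if i mod 2 = p then z i + z (Suc i) else 0) + (if N mod 2 = p then z N else 0) + z (Suc N)"
      using assms(1) by (cases "N mod 2 = p") (auto simp: mod_Suc)
    with Suc show ?case
      by simp
  qed (use assms in simp)
  moreover have "0 \<le> (if N mod 2 = p then z N else 0)"
    using assms by simp
  ultimately show ?thesis
    by linarith
qed

lemma chain_penalty_lipschitz:
  assumes "p < 2" "N < d"
  shows "\<bar>chain_penalty p N \<delta> x - chain_penalty p N \<delta> y\<bar> \<le> sqrt (real N + 1) * nrmd d (vsub x y)"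
proof -
  define z where "z i = \<bar>x i - y i\<bar>" for i
  have "\<bar>chain_penalty p N \<delta> x - chain_penalty p N \<delta> y\<bar>
     \<le> (\<Sum>i<N. \<bar>if i mod 2 = p then pseudo_huber \<delta> (x i - x (Suc i)) - pseudo_huber \<delta> (y i - y (Suc i)) else 0\<bar>)"
    unfolding chain_penalty_def sum_subtractf[symmetric]
    by (rule order_trans[OF sum_abs]) (simp add: if_distrib cong: if_cong)
  also have "\<dots> \<le> (\<Sum>i<N. if i mod 2 = p then z i + z (Suc i) else 0)"
  proof (rule sum_mono)
    fix i
    have "\<bar>pseudo_huber \<delta> (x i - x (Suc i)) - pseudo_huber \<delta> (y i - y (Suc i))\<bar> \<le> z i + z (Suc i)"
      using pseudo_huber_lipschitz[of \<delta> "x i - x (Suc i)" "y i - y (Suc i)"] unfolding z_def by linarith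
    then show "\<bar>if i mod 2 = p then pseudo_huber \<delta> (x i - x (Suc i)) - pseudo_huber \<delta> (y i - y (Suc i)) else 0\<bar>
        \<le> (if i mod 2 = p then z i + z (Suc i) else 0)"
      by simp
  qed
  also have "\<dots> \<le> (\<Sum>i\<le>N. z i)"
    using assms(1) by (intro sum_alternate_pairs_le) (simp_all add: z_def)
  also have "\<dots> \<le> sqrt (real N + 1) * nrmd d (vsub x y)"
    using sum_abs_le_nrmd[OF assms(2), of "vsub x y"] unfolding z_def vsub_def by simp
  finally show ?thesis .
qed

lemma chain_penalty_truncate_le:
  assumes "chain_cut N p K" "0 \<le> \<delta>"
  shows "chain_penalty p N \<delta> (\<lambda>k. if k < K then w k else 0) \<le> chain_penalty p N \<delta> w"
  unfolding chain_penalty_def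
proof (rule sum_mono)
  fix j assume "j \<in> {..<N}"
  then have "j mod 2 = p \<Longrightarrow> j < K \<Longrightarrow> Suc j < K"
    using assms(1) unfolding chain_cut_def by (metis Suc_lessI diff_Suc_1 lessThan_iff)
  then show "(if j mod 2 = p then pseudo_huber \<delta> ((if j < K then w j else 0) - (if Suc j < K then w (Suc j) else 0)) else 0)
      \<le> (if j mod 2 = p then pseudo_huber \<delta> (w j - w (Suc j)) else 0)"
    using pseudo_huber_nonneg[OF assms(2)] pseudo_huber_0[OF assms(2)] by auto
qed

lemma sum_indicator_two_le:
  fixes c :: real
  assumes "0 \<le> c"
  shows "(\<Sum>j<N. if j = i \<or> Suc j = i then c else 0) \<le> 2 * c"
proof -
  have "(\<Sum>j<N. if j = i \<or> Suc j = i then c else 0)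
          \<le> (\<Sum>j<N. (if j = i then c else 0) + (if j = i - 1 \<and> i \<noteq> 0 then c else 0))"
    using assms by (intro sum_mono) auto
  also have "\<dots> \<le> c + c"
    unfolding sum.distrib
  proof (rule add_mono)
    show "(\<Sum>j<N. if j = i then c else 0) \<le> c"
      using assms by (simp add: sum.delta)
    show "(\<Sum>j<N. if j = i - 1 \<and> i \<noteq> 0 then c else 0) \<le> c"
      using assms by (cases "i = 0") (simp_all add: sum.delta)
  qed
  finally show ?thesis
    by simp
qed

text \<open>Moving mass \<open>t\<close> to a coordinate beyond a cut (while shrinking the rest) changes at most
  two links, each by at most \<open>t\<^sup>2 / (2 * \<delta>)\<close>.\<close>
lemma chain_penalty_perturb_le:
  assumes cut: "chain_cut N p K" and w: "w \<in> vanishing_from K" and "K \<le> i"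
    and s: "0 \<le> s" "s \<le> 1" and "0 < \<delta>"
  shows "chain_penalty p N \<delta> ((\<lambda>k. (1 - s) * w k)(i := t)) \<le> chain_penalty p N \<delta> w + t\<^sup>2 / \<delta>"
proof -
  define v where "v = (\<lambda>k. (1 - s) * w k)(i := t)"
  have wz: "\<And>k. K \<le> k \<Longrightarrow> w k = 0"
    using w unfolding vanishing_from_def by auto
  have link: "(if j mod 2 = p then pseudo_huber \<delta> (v j - v (Suc j)) - pseudo_huber \<delta> (w j - w (Suc j)) else 0)
                \<le> (if j = i \<or> Suc j = i then t\<^sup>2 / (2 * \<delta>) else 0)"
    if "j < N" for j
  proof (cases "j mod 2 = p")
    case False
    then show ?thesis
      using \<open>0 < \<delta>\<close> by simp
  next
    case parity: True
    consider "j = i" | "Suc j = i" | "j \<noteq> i" "Suc j \<noteq> i"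
      by blast
    then show ?thesis
    proof cases
      case 1
      then have "v j - v (Suc j) = t" "w j - w (Suc j) = 0"
        unfolding v_def using wz \<open>K \<le> i\<close> by auto
      then show ?thesis
        using 1 parity pseudo_huber_le_quadratic[OF \<open>0 < \<delta>\<close>, of t] pseudo_huber_0 \<open>0 < \<delta>\<close> by simp
    next
      case 2
      have "K \<le> j"
        using cut that parity 2 \<open>K \<le> i\<close> unfolding chain_cut_def by (cases "j = K - 1") auto
      then have "v j - v (Suc j) = - t" "w j - w (Suc j) = 0"
        unfolding v_def using wz 2 by auto
      then show ?thesis
        using 2 parity pseudo_huber_le_quadratic[OF \<open>0 < \<delta>\<close>, of "-t"] pseudo_huber_0 \<open>0 < \<delta>\<close> by simp
    next
      case 3
      have "v j - v (Suc j) = (1 - s) * (w j - w (Suc j)) + s * 0"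
        unfolding v_def using 3 by (simp add: algebra_simps)
      then have "pseudo_huber \<delta> (v j - v (Suc j)) \<le> (1 - s) * pseudo_huber \<delta> (w j - w (Suc j))"
        using pseudo_huber_convex[of "1 - s" \<delta> "w j - w (Suc j)" 0] s pseudo_huber_0 \<open>0 < \<delta>\<close> by simp
      moreover have "0 \<le> s * pseudo_huber \<delta> (w j - w (Suc j))"
        using s pseudo_huber_nonneg \<open>0 < \<delta>\<close> by simp
      ultimately show ?thesis
        using 3 by (simp add: algebra_simps)
    qed
  qed
  have "chain_penalty p N \<delta> v - chain_penalty p N \<delta> w
      = (\<Sum>j<N. if j mod 2 = p then pseudo_huber \<delta> (v j - v (Suc j)) - pseudo_huber \<delta> (w j - w (Suc j)) else 0)"
    unfolding chain_penalty_def by (simp add: sum_subtractf[symmetric] if_distrib cong: if_cong)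
  also have "\<dots> \<le> (\<Sum>j<N. if j = i \<or> Suc j = i then t\<^sup>2 / (2 * \<delta>) else 0)"
    using link by (intro sum_mono) simp
  also have "\<dots> \<le> 2 * (t\<^sup>2 / (2 * \<delta>))"
    using \<open>0 < \<delta>\<close> by (intro sum_indicator_two_le) simp
  finally show ?thesis
    unfolding v_def using \<open>0 < \<delta>\<close> by simp
qed

lemma abs_diff_le_sum_abs_steps:
  fixes w :: "nat \<Rightarrow> real"
  shows "\<bar>w 0 - w N\<bar> \<le> (\<Sum>i<N. \<bar>w i - w (Suc i)\<bar>)"
proof (induction N)
  case (Suc N)
  have "\<bar>w 0 - w (Suc N)\<bar> \<le> \<bar>w 0 - w N\<bar> + \<bar>w N - w (Suc N)\<bar>"
    by linarith
  with Suc show ?case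
    by simp
qed simp

lemma eq_0_if_linear_le_quadratic:
  fixes g M r :: real
  assumes "0 < M" "0 < r" and le: "\<And>t. 0 < \<bar>t\<bar> \<Longrightarrow> \<bar>t\<bar> \<le> r \<Longrightarrow> g * t \<le> M * t\<^sup>2"
  shows "g = 0"
proof (rule ccontr)
  assume "g \<noteq> 0"
  define a where "a = min r (\<bar>g\<bar> / (2 * M))"
  have a: "0 < a" "a \<le> r" "M * a \<le> \<bar>g\<bar> / 2"
    unfolding a_def using \<open>g \<noteq> 0\<close> assms(1,2) by (auto simp: field_simps min_def)
  have "g * (sgn g * a) \<le> M * (sgn g * a)\<^sup>2"
    using le[of "sgn g * a"] a \<open>g \<noteq> 0\<close> by (simp add: abs_mult)
  then have "\<bar>g\<bar> * a \<le> (M * a) * a"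
    using \<open>g \<noteq> 0\<close> by (simp add: power2_eq_square abs_sgn algebra_simps)
  then have "\<bar>g\<bar> \<le> M * a"
    using \<open>0 < a\<close> by simp
  then show False
    using a \<open>g \<noteq> 0\<close> by simp
qed

section \<open>The hard pair of functions\<close>

locale hard_instance =
  fixes d N :: nat and \<mu> \<alpha> \<delta> \<eta> :: real
  assumes N_less_d: "N < d" and mu_pos: "0 < \<mu>" and alpha_pos: "0 < \<alpha>"
    and delta_pos: "0 < \<delta>" and eta_pos: "0 < \<eta>"
begin

definition F_smooth :: "nat \<Rightarrow> vec \<Rightarrow> real" where
  "F_smooth p w = \<mu> / 2 * sqnorm d w - \<alpha> * w 0 + 2 * \<alpha> * chain_penalty p N \<delta> w"

text \<open>The kinked term is tiny, but it makes \<open>F p\<close> nowhere twice differentiable, so the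
  Hessian-based generators of Assumption 1 never apply.\<close>
definition F :: "nat \<Rightarrow> vec \<Rightarrow> real" where
  "F p w = \<eta> * kinked (w 0) + F_smooth p w"

lemma d_pos: "0 < d"
  using N_less_d by simp

lemma F_smooth_convex:
  assumes "0 \<le> t" "t \<le> 1"
  shows "F_smooth p (\<lambda>i. t * x i + (1 - t) * y i)
           \<le> t * F_smooth p x + (1 - t) * F_smooth p y - \<mu> / 2 * t * (1 - t) * sqnorm d (vsub x y)"
proof -
  have "t * F_smooth p x + (1 - t) * F_smooth p y - \<mu> / 2 * t * (1 - t) * sqnorm d (vsub x y)
          - F_smooth p (\<lambda>i. t * x i + (1 - t) * y i)
        = 2 * \<alpha> * (t * chain_penalty p N \<delta> x + (1 - t) * chain_penalty p N \<delta> y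
                     - chain_penalty p N \<delta> (\<lambda>i. t * x i + (1 - t) * y i))"
    unfolding F_smooth_def sqnorm_convex_comb by (simp add: field_simps)
  moreover have "0 \<le> 2 * \<alpha> * (t * chain_penalty p N \<delta> x + (1 - t) * chain_penalty p N \<delta> y
                     - chain_penalty p N \<delta> (\<lambda>i. t * x i + (1 - t) * y i))"
    using alpha_pos chain_penalty_convex[OF assms] by simp
  ultimately show ?thesis
    by linarith
qed

lemma F_strongly_convex:
  assumes "lam \<le> \<mu>"
  shows "strongly_convex_on_ball d lam (F p)"
  unfolding strongly_convex_on_ball_def
proof (intro ballI allI impI)
  fix x y :: vec and t :: real
  assume t: "0 \<le> t \<and> t \<le> 1"
  have "\<eta> * kinked (t * x 0 + (1 - t) * y 0) \<le> \<eta> * (t * kinked (x 0) + (1 - t) * kinked (y 0))"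
    using kinked_convex t eta_pos by (intro mult_left_mono) auto
  moreover have "lam / 2 * t * (1 - t) * sqnorm d (vsub x y) \<le> \<mu> / 2 * t * (1 - t) * sqnorm d (vsub x y)"
    using assms t sqnorm_nonneg[of d "vsub x y"] by (intro mult_right_mono) auto
  moreover note F_smooth_convex[of t p x y]
  ultimately have "F p (\<lambda>i. t * x i + (1 - t) * y i)
      \<le> \<eta> * (t * kinked (x 0) + (1 - t) * kinked (y 0))
         + (t * F_smooth p x + (1 - t) * F_smooth p y - lam / 2 * t * (1 - t) * sqnorm d (vsub x y))"
    using t unfolding F_def by simp
  then show "F p (\<lambda>i. t * x i + (1 - t) * y i)
           \<le> t * F p x + (1 - t) * F p y - lam / 2 * t * (1 - t) * (nrmd d (vsub x y))\<^sup>2"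
    unfolding F_def nrmd_power2 by (simp add: algebra_simps)
qed

lemma F_lipschitz:
  assumes "p < 2"
  shows "lipschitz_on_ball d (\<eta> + \<mu> + \<alpha> + 2 * \<alpha> * sqrt (real N + 1)) (F p)"
  unfolding lipschitz_on_ball_def
proof (intro ballI)
  fix x y assume x: "x \<in> Bd d" and y: "y \<in> Bd d"
  define n where "n = nrmd d (vsub x y)"
  have x0: "\<bar>x 0 - y 0\<bar> \<le> n"
    using abs_coord_le_nrmd[OF d_pos, of "vsub x y"] unfolding n_def vsub_def by simp
  have "F p x - F p y = \<eta> * (kinked (x 0) - kinked (y 0)) + \<mu> / 2 * (sqnorm d x - sqnorm d y)
      - \<alpha> * (x 0 - y 0) + 2 * \<alpha> * (chain_penalty p N \<delta> x - chain_penalty p N \<delta> y)"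
    unfolding F_def F_smooth_def by (simp add: algebra_simps)
  then have "\<bar>F p x - F p y\<bar> \<le> \<bar>\<eta> * (kinked (x 0) - kinked (y 0))\<bar> + \<bar>\<mu> / 2 * (sqnorm d x - sqnorm d y)\<bar>
      + \<bar>\<alpha> * (x 0 - y 0)\<bar> + \<bar>2 * \<alpha> * (chain_penalty p N \<delta> x - chain_penalty p N \<delta> y)\<bar>"
    by (simp only: abs_four_terms_le)
  also have "\<dots> = \<eta> * \<bar>kinked (x 0) - kinked (y 0)\<bar> + \<mu> / 2 * \<bar>sqnorm d x - sqnorm d y\<bar>
      + \<alpha> * \<bar>x 0 - y 0\<bar> + 2 * \<alpha> * \<bar>chain_penalty p N \<delta> x - chain_penalty p N \<delta> y\<bar>"
    using eta_pos mu_pos alpha_pos by (simp add: abs_mult)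
  also have "\<dots> \<le> \<eta> * n + \<mu> / 2 * (2 * n) + \<alpha> * n + 2 * \<alpha> * (sqrt (real N + 1) * n)"
  proof (intro add_mono mult_left_mono)
    show "\<bar>kinked (x 0) - kinked (y 0)\<bar> \<le> n"
      using kinked_lipschitz x0 by (rule order_trans)
    show "\<bar>sqnorm d x - sqnorm d y\<bar> \<le> 2 * n"
      using sqnorm_lipschitz[OF x y] unfolding n_def .
    show "\<bar>chain_penalty p N \<delta> x - chain_penalty p N \<delta> y\<bar> \<le> sqrt (real N + 1) * n"
      using chain_penalty_lipschitz[OF assms N_less_d] unfolding n_def .
  qed (use x0 eta_pos mu_pos alpha_pos in auto)
  finally have "\<bar>F p x - F p y\<bar> \<le> \<eta> * n + \<mu> * n + \<alpha> * n + 2 * \<alpha> * (sqrt (real N + 1) * n)"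
    by simp
  then show "\<bar>F p x - F p y\<bar> \<le> (\<eta> + \<mu> + \<alpha> + 2 * \<alpha> * sqrt (real N + 1)) * nrmd d (vsub x y)"
    unfolding n_def by (simp add: algebra_simps)
qed

lemma F_no_gradient_at_kink:
  assumes v: "v \<in> Rd d" "nrmd d v \<le> 1 - s" "v 0 = kink_at n" and "0 < s"
  shows "\<not> has_grad_at d (F p) v g"
proof
  assume "has_grad_at d (F p) v g"
  moreover have e: "0 < \<eta> * kink_weight n / 2"
    using eta_pos kink_weight_pos[of n] by simp
  ultimately obtain r where "r > 0" and grad: "\<And>u. u \<in> Bd d \<Longrightarrow> nrmd d (vsub u v) < r \<Longrightarrow>
      \<bar>F p u - F p v - ipd d g (vsub u v)\<bar> \<le> \<eta> * kink_weight n / 2 * nrmd d (vsub u v)"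
    unfolding has_grad_at_def by blast
  define \<tau> where "\<tau> = min (r / 2) s"
  have \<tau>: "0 < \<tau>" "\<tau> < r" "\<tau> \<le> s"
    unfolding \<tau>_def using \<open>r > 0\<close> \<open>0 < s\<close> by auto
  define vp where "vp = v(0 := kink_at n + \<tau>)"
  define vm where "vm = v(0 := kink_at n - \<tau>)"
  have vp: "vp \<in> Bd d" "nrmd d (vsub vp v) = \<tau>" "ipd d g (vsub vp v) = g 0 * \<tau>"
    unfolding vp_def using \<tau> v d_pos nrmd_vsub_fun_upd ipd_vsub_fun_upd by (auto intro!: fun_upd_in_Bd)
  have vm: "vm \<in> Bd d" "nrmd d (vsub vm v) = \<tau>" "ipd d g (vsub vm v) = - (g 0 * \<tau>)"
    unfolding vm_def using \<tau> v d_pos nrmd_vsub_fun_upd ipd_vsub_fun_upd by (auto intro!: fun_upd_in_Bd)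
  have up: "\<bar>F p vp - F p v - g 0 * \<tau>\<bar> \<le> \<eta> * kink_weight n / 2 * \<tau>"
    using grad[OF vp(1)] vp(2,3) \<open>\<tau> < r\<close> by simp
  have down: "\<bar>F p vm - F p v + g 0 * \<tau>\<bar> \<le> \<eta> * kink_weight n / 2 * \<tau>"
    using grad[OF vm(1)] vm(2,3) \<open>\<tau> < r\<close> by simp
  have "F p vp + F p vm - 2 * F p v \<le> \<eta> * kink_weight n * \<tau>"
    using abs_le_D1[OF up] abs_le_D1[OF down] by (simp add: field_simps)
  moreover have "F_smooth p v \<le> (F_smooth p vp + F_smooth p vm) / 2"
  proof -
    have "(\<lambda>i. 1/2 * vp i + (1 - 1/2) * vm i) = v"
      unfolding vp_def vm_def using v by (auto simp: fun_eq_iff field_simps)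
    then have "F_smooth p v \<le> F_smooth p vp / 2 + F_smooth p vm / 2 - \<mu> * sqnorm d (vsub vp vm) / 8"
      using F_smooth_convex[of "1/2" p vp vm] by simp
    moreover have "0 \<le> \<mu> * sqnorm d (vsub vp vm)"
      using mu_pos sqnorm_nonneg[of d "vsub vp vm"] by simp
    ultimately show ?thesis
      by (simp add: field_simps)
  qed
  moreover have "\<eta> * (2 * \<tau> * kink_weight n)
      \<le> \<eta> * (kinked (kink_at n + \<tau>) + kinked (kink_at n - \<tau>) - 2 * kinked (kink_at n))"
    using eta_pos kinked_second_difference \<tau> by (intro mult_left_mono) auto
  ultimately have "\<eta> * (2 * \<tau> * kink_weight n) \<le> \<eta> * kink_weight n * \<tau>"
    unfolding F_def vp_def vm_def using v by (simp add: algebra_simps)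
  then show False
    using eta_pos kink_weight_pos[of n] \<tau> by (simp add: algebra_simps)
qed

text \<open>A Hessian needs gradients on a whole neighbourhood, but every neighbourhood contains a
  point strictly inside the ball whose first coordinate is a kink.\<close>
lemma F_no_hessian: "\<not> hessian_at d (F p) w H"
proof
  assume "hessian_at d (F p) w H"
  then obtain G r where w: "w \<in> Bd d" and "r > 0"
    and grad: "\<And>v. v \<in> Bd d \<Longrightarrow> nrmd d (vsub v w) < r \<Longrightarrow> has_grad_at d (F p) v (G v)"
    unfolding hessian_at_def by blast
  define \<sigma> where "\<sigma> = min (1/2) (r / 4)"
  have \<sigma>: "0 < \<sigma>" "\<sigma> \<le> 1/2" "\<sigma> \<le> r / 4"
    unfolding \<sigma>_def using \<open>r > 0\<close> by auto
  define w' where "w' = (\<lambda>i. (1 - \<sigma>) * w i)"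
  have w_norm: "nrmd d w \<le> 1" "w \<in> Rd d"
    using w unfolding Bd_def by auto
  have w'_norm: "nrmd d w' \<le> 1 - \<sigma>"
    unfolding w'_def nrmd_scale using \<sigma> w_norm by (simp add: mult_left_le)
  have w'_Rd: "w' \<in> Rd d"
    using w_norm unfolding w'_def Rd_def by auto
  have "\<bar>w' 0\<bar> \<le> 1"
    using abs_coord_le_nrmd[OF d_pos, of w'] w'_norm \<sigma> by linarith
  then obtain n where n: "\<bar>kink_at n - w' 0\<bar> < \<sigma> / 4"
    using kink_at_dense \<sigma> by (metis divide_pos_pos zero_less_numeral)
  define v where "v = w'(0 := kink_at n)"
  have v_Rd: "v \<in> Rd d"
    using w'_Rd d_pos unfolding v_def Rd_def by auto
  have v_norm: "nrmd d v \<le> 1 - 3 * \<sigma> / 4"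
    using nrmd_fun_upd_le[OF d_pos, of w' "kink_at n"] w'_norm n unfolding v_def by linarith
  have "vsub w' w = (\<lambda>i. (- \<sigma>) * w i)"
    unfolding w'_def vsub_def by (auto simp: algebra_simps)
  then have "nrmd d (vsub w' w) \<le> \<sigma>"
    using w_norm \<sigma> by (simp only: nrmd_scale) (simp add: mult_left_le)
  moreover have "nrmd d (vsub v w') = \<bar>kink_at n - w' 0\<bar>"
    unfolding v_def using nrmd_vsub_fun_upd[OF d_pos] by simp
  ultimately have "nrmd d (vsub v w) < r"
    using nrmd_vsub_triangle[of d v w w'] n \<sigma> by linarith
  moreover have "v \<in> Bd d"
    using v_Rd v_norm \<sigma> unfolding Bd_def by auto
  ultimately have "has_grad_at d (F p) v (G v)"
    using grad by simp
  moreover have "\<not> has_grad_at d (F p) v (G v)"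
    using \<sigma> by (intro F_no_gradient_at_kink[OF v_Rd v_norm]) (auto simp: v_def)
  ultimately show False
    by simp
qed

end

section \<open>Each communication round extends the support by at most one coordinate\<close>

lemma shrink_fun_upd_in_Bd:
  assumes "w \<in> Bd d" "i < d" "w i = 0" "t\<^sup>2 \<le> 1"
  shows "((\<lambda>k. (1 - t\<^sup>2) * w k)(i := t)) \<in> Bd d"
proof -
  have "sqnorm d ((\<lambda>k. (1 - t\<^sup>2) * w k)(i := t)) = (1 - t\<^sup>2)\<^sup>2 * sqnorm d w + t\<^sup>2"
    using sqnorm_fun_upd[OF assms(2), of "\<lambda>k. (1 - t\<^sup>2) * w k" t] sqnorm_scale[of d "1 - t\<^sup>2" w] assms(3)
    by simp
  also have "\<dots> \<le> (1 - t\<^sup>2)\<^sup>2 * 1 + t\<^sup>2"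
    using sqnorm_le_1_if_Bd[OF assms(1)] by (intro add_right_mono mult_left_mono) auto
  also have "\<dots> = 1 - t\<^sup>2 * (1 - t\<^sup>2)"
    by (simp add: power2_eq_square algebra_simps)
  also have "\<dots> \<le> 1"
    using assms(4) by simp
  finally have "sqnorm d ((\<lambda>k. (1 - t\<^sup>2) * w k)(i := t)) \<le> 1" .
  then show ?thesis
    using assms(1,2) unfolding Bd_def Rd_def nrmd_eq_sqrt_sqnorm by auto
qed

lemma ipd_vsub_shrink_fun_upd:
  assumes "i < d" "w i = 0"
  shows "ipd d g (vsub ((\<lambda>k. (1 - s) * w k)(i := t)) w) = g i * t - s * ipd d g w"
proof -
  have "ipd d g (vsub ((\<lambda>k. (1 - s) * w k)(i := t)) w)
      = (\<Sum>k<d. (if k = i then g i * t else 0) - s * (g k * w k))"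
    unfolding ipd_def vsub_def using assms by (intro sum.cong) (auto simp: algebra_simps)
  also have "\<dots> = g i * t - s * ipd d g w"
    unfolding sum_subtractf ipd_def sum_distrib_left using assms by simp
  finally show ?thesis .
qed

context hard_instance
begin

lemma F_shrink_fun_upd_le:
  assumes cut: "chain_cut N p K" and w: "w \<in> Bd d" "w \<in> vanishing_from K"
    and i: "K \<le> i" "i < d" and t: "t\<^sup>2 \<le> 1"
  shows "F p ((\<lambda>k. (1 - t\<^sup>2) * w k)(i := t)) \<le> F p w + (\<eta> + \<alpha> + \<mu> / 2 + 2 * \<alpha> / \<delta>) * t\<^sup>2"
proof -
  define v where "v = (\<lambda>k. (1 - t\<^sup>2) * w k)(i := t)"
  have "1 \<le> K"
    using cut unfolding chain_cut_def by simp
  then have v0: "v 0 - w 0 = - t\<^sup>2 * w 0"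
    unfolding v_def using i by (simp add: algebra_simps)
  have wi: "w i = 0"
    using w i unfolding vanishing_from_def by simp
  have w0: "\<bar>w 0\<bar> \<le> 1"
    using abs_coord_le_nrmd[OF d_pos, of w] w unfolding Bd_def by simp
  have "\<eta> * (kinked (v 0) - kinked (w 0)) \<le> \<eta> * t\<^sup>2"
  proof (intro mult_left_mono)
    have "\<bar>kinked (v 0) - kinked (w 0)\<bar> \<le> t\<^sup>2 * \<bar>w 0\<bar>"
      using kinked_lipschitz[of "v 0" "w 0"] unfolding v0 by (simp add: abs_mult)
    then show "kinked (v 0) - kinked (w 0) \<le> t\<^sup>2"
      using w0 mult_left_le[of "\<bar>w 0\<bar>" "t\<^sup>2"] by simp
  qed (use eta_pos in simp)
  moreover have "- \<alpha> * (v 0 - w 0) \<le> \<alpha> * t\<^sup>2"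
    unfolding v0 using w0 alpha_pos mult_left_le[of "w 0" "t\<^sup>2"] by (simp add: abs_le_iff)
  moreover have "\<mu> / 2 * (sqnorm d v - sqnorm d w) \<le> \<mu> / 2 * t\<^sup>2"
  proof (intro mult_left_mono)
    have "sqnorm d v = (1 - t\<^sup>2)\<^sup>2 * sqnorm d w + t\<^sup>2"
      unfolding v_def using sqnorm_fun_upd[OF i(2)] sqnorm_scale[of d "1 - t\<^sup>2" w] wi by simp
    moreover have "(1 - t\<^sup>2)\<^sup>2 * sqnorm d w \<le> 1 * sqnorm d w"
      using t sqnorm_nonneg[of d w] by (intro mult_right_mono) (auto simp: power_le_one)
    ultimately show "sqnorm d v - sqnorm d w \<le> t\<^sup>2"
      by simp
  qed (use mu_pos in simp)
  moreover have "2 * \<alpha> * (chain_penalty p N \<delta> v - chain_penalty p N \<delta> w) \<le> 2 * \<alpha> * (t\<^sup>2 / \<delta>)"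
    using chain_penalty_perturb_le[OF cut w(2) i(1), of "t\<^sup>2" \<delta> t] t delta_pos alpha_pos
    unfolding v_def by (intro mult_left_mono) auto
  ultimately have "F p v - F p w \<le> \<eta> * t\<^sup>2 + \<alpha> * t\<^sup>2 + \<mu> / 2 * t\<^sup>2 + 2 * \<alpha> * (t\<^sup>2 / \<delta>)"
    unfolding F_def F_smooth_def by (simp add: algebra_simps)
  then show ?thesis
    unfolding v_def by (simp add: algebra_simps)
qed

text \<open>Testing the subgradient inequality at \<open>(1 - t\<^sup>2) w + t e\<^sub>i\<close> gives \<open>g\<^sub>i t \<le> M t\<^sup>2\<close>
  for all small \<open>t\<close> of both signs.\<close>
lemma subgrad_F_vanishing_from:
  assumes cut: "chain_cut N p K" and w: "w \<in> vanishing_from K" and g: "subgrad d (F p) w g"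
  shows "g \<in> vanishing_from K"
  unfolding vanishing_from_def
proof (intro CollectI allI impI)
  fix i assume "K \<le> i"
  have wB: "w \<in> Bd d" and g_Rd: "g \<in> Rd d"
    and g_le: "\<And>v. v \<in> Bd d \<Longrightarrow> F p w + ipd d g (vsub v w) \<le> F p v"
    using g unfolding subgrad_def by auto
  show "g i = 0"
  proof (cases "i < d")
    case False
    then show ?thesis
      using g_Rd unfolding Rd_def by auto
  next
    case True
    have wi: "w i = 0"
      using w \<open>K \<le> i\<close> unfolding vanishing_from_def by simp
    define M where "M = \<eta> + \<alpha> + \<mu> / 2 + 2 * \<alpha> / \<delta> + \<bar>ipd d g w\<bar>"
    have "0 < M"
      unfolding M_def using eta_pos alpha_pos mu_pos delta_pos by (simp add: add_pos_nonneg)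
    then show "g i = 0"
    proof (rule eq_0_if_linear_le_quadratic[where r = 1])
      fix t :: real assume "\<bar>t\<bar> \<le> 1"
      then have t: "t\<^sup>2 \<le> 1"
        by (simp add: abs_square_le_1)
      have "F p w + (g i * t - t\<^sup>2 * ipd d g w) \<le> F p w + (\<eta> + \<alpha> + \<mu> / 2 + 2 * \<alpha> / \<delta>) * t\<^sup>2"
        using g_le[OF shrink_fun_upd_in_Bd[OF wB True wi t]] ipd_vsub_shrink_fun_upd[of i d w g "t\<^sup>2" t, OF True wi]
          F_shrink_fun_upd_le[OF cut wB w \<open>K \<le> i\<close> True t] by simp
      moreover have "t\<^sup>2 * ipd d g w \<le> t\<^sup>2 * \<bar>ipd d g w\<bar>"
        by (intro mult_left_mono) auto
      moreover have "M * t\<^sup>2 = (\<eta> + \<alpha> + \<mu> / 2 + 2 * \<alpha> / \<delta>) * t\<^sup>2 + t\<^sup>2 * \<bar>ipd d g w\<bar>"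
        unfolding M_def by (simp add: algebra_simps)
      ultimately show "g i * t \<le> M * t\<^sup>2"
        by linarith
    qed simp
  qed
qed

lemma F_truncate_less:
  assumes cut: "chain_cut N p K" and "w \<in> Rd d" "w \<notin> vanishing_from K"
  shows "F p (\<lambda>k. if k < K then w k else 0) < F p w"
proof -
  define v where "v = (\<lambda>k. if k < K then w k else 0)"
  obtain i where "K \<le> i" "w i \<noteq> 0"
    using assms(3) unfolding vanishing_from_def by auto
  have "i < d"
    using assms(2) \<open>w i \<noteq> 0\<close> unfolding Rd_def by (rule_tac ccontr) auto
  have "sqnorm d v < sqnorm d w"
    unfolding sqnorm_def
  proof (rule sum_strict_mono_ex1)
    show "\<forall>k\<in>{..<d}. (v k)\<^sup>2 \<le> (w k)\<^sup>2"
      unfolding v_def by simp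
    show "\<exists>k\<in>{..<d}. (v k)\<^sup>2 < (w k)\<^sup>2"
      using \<open>K \<le> i\<close> \<open>w i \<noteq> 0\<close> \<open>i < d\<close> unfolding v_def by (intro bexI[of _ i]) auto
  qed simp
  then have "\<mu> / 2 * sqnorm d v < \<mu> / 2 * sqnorm d w"
    using mu_pos by simp
  moreover have "2 * \<alpha> * chain_penalty p N \<delta> v \<le> 2 * \<alpha> * chain_penalty p N \<delta> w"
    unfolding v_def using chain_penalty_truncate_le[OF cut less_imp_le[OF delta_pos]] alpha_pos
    by (intro mult_left_mono) simp_all
  moreover have "v 0 = w 0"
    using cut unfolding v_def chain_cut_def by simp
  ultimately have "F p v < F p w"
    unfolding F_def F_smooth_def by simp
  then show ?thesis
    unfolding v_def .
qed

lemma gens_vanishing_from: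
  assumes "chain_cut N p K" "W \<subseteq> vanishing_from K"
  shows "gens d (F p) W \<subseteq> vanishing_from K"
proof -
  have "{g. \<exists>w\<in>W. subgrad d (F p) w g} \<subseteq> vanishing_from K"
    using assms subgrad_F_vanishing_from by blast
  then show ?thesis
    unfolding gens_def using assms(2) F_no_hessian by auto
qed

text \<open>If \<open>\<gamma> w + \<nu> g\<close> vanishes beyond the cut, truncating \<open>w\<close> there does not increase the
  linearisation \<open>\<langle>g, \<cdot> - w\<rangle>\<close> but strictly decreases \<open>F p\<close>, contradicting \<open>g \<in> \<partial>F p (w)\<close>.\<close>
lemma valid_add_vanishing_from:
  assumes cut: "chain_cut N p K" and W: "W \<subseteq> vanishing_from K" and add: "valid_add d (F p) W w"
  shows "w \<in> vanishing_from K"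
proof (rule ccontr)
  assume w_notin: "w \<notin> vanishing_from K"
  obtain g \<gamma> \<nu> where g: "subgrad d (F p) w g" and "\<gamma> \<ge> 0" "\<nu> \<ge> 0" "\<gamma> + \<nu> > 0"
    and "(\<lambda>i. \<gamma> * w i + \<nu> * g i) \<in> lin_span (gens d (F p) W)"
    using add unfolding valid_add_def by blast
  then have comb: "\<And>k. K \<le> k \<Longrightarrow> \<gamma> * w k + \<nu> * g k = 0"
    using lin_span_vanishing_from[OF gens_vanishing_from[OF cut W]] unfolding vanishing_from_def by blast
  have wB: "w \<in> Bd d" and g_le: "\<And>v. v \<in> Bd d \<Longrightarrow> F p w + ipd d g (vsub v w) \<le> F p v"
    using g unfolding subgrad_def by auto
  define v where "v = (\<lambda>k. if k < K then w k else 0)"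
  have "0 < \<nu>"
    using comb w_notin \<open>\<gamma> \<ge> 0\<close> \<open>\<nu> \<ge> 0\<close> \<open>\<gamma> + \<nu> > 0\<close> unfolding vanishing_from_def by fastforce
  have "0 \<le> ipd d g (vsub v w)"
    unfolding ipd_def
  proof (rule sum_nonneg)
    fix k
    have "(\<gamma> * w k + \<nu> * g k) * w k = 0" if "K \<le> k"
      using comb[OF that] by simp
    then have "\<nu> * (g k * vsub v w k) = (if k < K then 0 else \<gamma> * (w k)\<^sup>2)"
      unfolding v_def vsub_def by (auto simp: power2_eq_square algebra_simps)
    then have "0 \<le> \<nu> * (g k * vsub v w k)"
      using \<open>\<gamma> \<ge> 0\<close> by simp
    then show "0 \<le> g k * vsub v w k"
      using \<open>0 < \<nu>\<close> by (simp add: zero_le_mult_iff)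
  qed
  moreover have "v \<in> Bd d"
  proof -
    have "sqnorm d v \<le> sqnorm d w"
      unfolding sqnorm_def v_def by (intro sum_mono) auto
    then show ?thesis
      using wB unfolding Bd_def Rd_def nrmd_eq_sqrt_sqnorm v_def by auto
  qed
  ultimately have "F p w \<le> F p v"
    using g_le by force
  moreover have "F p v < F p w"
    unfolding v_def using F_truncate_less[OF cut _ w_notin] wB unfolding Bd_def by simp
  ultimately show False
    by simp
qed

lemma local_ext_vanishing_from:
  assumes cut: "chain_cut N p K" and W: "W \<subseteq> vanishing_from K" and ext: "local_ext d (F p) W W'"
  shows "W' \<subseteq> vanishing_from K"
proof -
  obtain ws where W': "W' = W \<union> set ws"
    and add: "\<And>k. k < length ws \<Longrightarrow> valid_add d (F p) (W \<union> set (take k ws)) (ws ! k)"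
    using ext unfolding local_ext_def by blast
  have "k \<le> length ws \<Longrightarrow> set (take k ws) \<subseteq> vanishing_from K" for k
  proof (induction k)
    case (Suc k)
    then have "ws ! k \<in> vanishing_from K"
      using valid_add_vanishing_from[OF cut _ add] W by simp
    with Suc show ?case
      by (simp add: take_Suc_conv_app_nth)
  qed simp
  from this[of "length ws"] show ?thesis
    using W' W by simp
qed

text \<open>A machine of parity \<open>p\<close> can move the support from \<open>t\<close> to \<open>t + 1\<close> only if its chain
  links these coordinates.\<close>
lemma run_vanishing_from:
  assumes run: "is_run d m Fs T Ws" and Fs: "\<And>j. j < m \<Longrightarrow> \<exists>p<2. Fs j = F p"
  shows "t \<le> T \<Longrightarrow> j < m \<Longrightarrow> Ws t j \<subseteq> vanishing_from (Suc t)"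
proof (induction t arbitrary: j)
  case 0
  then show ?case
    using run unfolding is_run_def vanishing_from_def by auto
next
  case (Suc t)
  have "t < T"
    using Suc.prems by simp
  then obtain V where ext: "\<forall>j<m. local_ext d (Fs j) (Ws t j) (V j)"
    and round: "\<forall>j<m. Ws (Suc t) j = (\<Union>i<m. V i)"
    using run unfolding is_run_def by blast
  have "V i \<subseteq> vanishing_from (Suc (Suc t))" if i: "i < m" for i
  proof -
    obtain p where p: "p < 2" "Fs i = F p"
      using Fs[OF i] by blast
    define K where "K = (if t mod 2 = p then Suc (Suc t) else Suc t)"
    have cut: "chain_cut N p K"
      unfolding chain_cut_def K_def using p(1) by (auto simp: mod_Suc)
    have "Ws t i \<subseteq> vanishing_from (Suc t)"
      using Suc.IH[OF _ i] Suc.prems by simp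
    also have "\<dots> \<subseteq> vanishing_from K"
      unfolding K_def by (rule vanishing_from_mono) simp
    finally have "V i \<subseteq> vanishing_from K"
      using local_ext_vanishing_from[OF cut] ext i p(2) by metis
    also have "\<dots> \<subseteq> vanishing_from (Suc (Suc t))"
      unfolding K_def by (rule vanishing_from_mono) simp
    finally show ?thesis .
  qed
  then show ?case
    using round Suc.prems by auto
qed

end

section \<open>Suboptimality of points that have not reached the end of the chain\<close>

definition round_bound :: "real \<Rightarrow> real \<Rightarrow> real" where
  "round_bound lam \<epsilon> = (if lam = 0 then 1 / (8 * \<epsilon>) else sqrt (1 / (16 * lam * \<epsilon>)))"

context hard_instance
begin

definition F_avg :: "vec \<Rightarrow> real" where
  "F_avg w = (F 0 w + F 1 w) / 2"

definition plateau :: "real \<Rightarrow> vec" where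
  "plateau c = (\<lambda>i. if i \<le> N then c else 0)"

lemma F_avg_eq:
  "F_avg w = \<eta> * kinked (w 0) + \<mu> / 2 * sqnorm d w - \<alpha> * w 0
               + \<alpha> * (\<Sum>i<N. pseudo_huber \<delta> (w i - w (Suc i)))"
  unfolding F_avg_def F_def F_smooth_def chain_penalty_add[symmetric] by (simp add: field_simps)

text \<open>Along a chain that ends in \<open>w N = 0\<close>, the links pay back the linear reward \<open>\<alpha> * w 0\<close>
  up to the smoothing error \<open>\<delta>\<close> per link.\<close>
lemma F_avg_lower:
  assumes "w N = 0"
  shows "\<eta> * kinked (w 0) - \<alpha> * (real N * \<delta>) \<le> F_avg w"
proof -
  have "\<bar>w 0\<bar> - real N * \<delta> \<le> (\<Sum>i<N. \<bar>w i - w (Suc i)\<bar> - \<delta>)"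
    using abs_diff_le_sum_abs_steps[of w N] assms by (simp add: sum_subtractf)
  also have "\<dots> \<le> (\<Sum>i<N. pseudo_huber \<delta> (w i - w (Suc i)))"
    by (intro sum_mono abs_minus_le_pseudo_huber)
  finally have "\<alpha> * (\<bar>w 0\<bar> - real N * \<delta>) \<le> \<alpha> * (\<Sum>i<N. pseudo_huber \<delta> (w i - w (Suc i)))"
    using alpha_pos by (intro mult_left_mono) auto
  moreover have "0 \<le> \<mu> / 2 * sqnorm d w"
    using mu_pos sqnorm_nonneg by simp
  moreover have "\<alpha> * w 0 \<le> \<alpha> * \<bar>w 0\<bar>"
    using alpha_pos by (intro mult_left_mono) auto
  ultimately show ?thesis
    unfolding F_avg_eq by (simp add: algebra_simps)
qed

lemma sqnorm_plateau: "sqnorm d (plateau c) = (real N + 1) * c\<^sup>2"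
proof -
  have "sqnorm d (plateau c) = (\<Sum>i\<in>{..<d}. if i \<le> N then c\<^sup>2 else 0)"
    unfolding sqnorm_def plateau_def by (intro sum.cong) auto
  also have "\<dots> = (\<Sum>i\<in>{i\<in>{..<d}. i \<le> N}. c\<^sup>2)"
    by (rule sum.inter_filter[symmetric]) simp
  also have "{i\<in>{..<d}. i \<le> N} = {..N}"
    using N_less_d by auto
  finally show ?thesis
    by simp
qed

lemma plateau_in_Bd:
  assumes "(real N + 1) * c\<^sup>2 \<le> 1"
  shows "plateau c \<in> Bd d"
proof -
  have "nrmd d (plateau c) \<le> 1"
    unfolding nrmd_eq_sqrt_sqnorm sqnorm_plateau using assms by simp
  moreover have "plateau c \<in> Rd d"
    unfolding Rd_def plateau_def using N_less_d by auto
  ultimately show ?thesis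
    unfolding Bd_def by simp
qed

lemma F_avg_plateau: "F_avg (plateau c) = \<eta> * kinked c + \<mu> / 2 * ((real N + 1) * c\<^sup>2) - \<alpha> * c"
proof -
  have "(\<Sum>i<N. pseudo_huber \<delta> (plateau c i - plateau c (Suc i))) = 0"
    unfolding plateau_def using pseudo_huber_0 delta_pos by (intro sum.neutral) auto
  then show ?thesis
    unfolding F_avg_eq sqnorm_plateau by (simp add: plateau_def)
qed

lemma F_avg_gap:
  assumes w: "w \<in> Bd d" "w N = 0" and c: "(real N + 1) * c\<^sup>2 \<le> 1"
  shows "\<alpha> * c - \<mu> / 2 * ((real N + 1) * c\<^sup>2) - 2 * \<eta> - \<alpha> * (real N * \<delta>)
           \<le> F_avg w - F_avg (plateau c)"
proof -
  have "c\<^sup>2 \<le> 1"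
    using c mult_right_mono[of 1 "real N + 1" "c\<^sup>2"] by simp
  then have "\<bar>c\<bar> \<le> 1"
    by (simp add: abs_square_le_1)
  moreover have "\<bar>w 0\<bar> \<le> 1"
    using abs_coord_le_nrmd[OF d_pos, of w] w unfolding Bd_def by auto
  ultimately have "- 2 \<le> kinked (w 0) - kinked c"
    using kinked_lipschitz[of "w 0" c] by linarith
  then have "\<eta> * (- 2) \<le> \<eta> * (kinked (w 0) - kinked c)"
    using eta_pos by (intro mult_left_mono) auto
  then show ?thesis
    using F_avg_lower[of w, OF w(2)] unfolding F_avg_plateau by (simp add: algebra_simps)
qed

text \<open>After \<open>T < N\<close> rounds the output vanishes at coordinate \<open>N\<close>, so by \<open>F_avg_gap\<close> it is
  worse than \<open>plateau c\<close> by more than \<open>\<epsilon>\<close>.\<close>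
lemma rounds_ge_N:
  assumes alg: "valid_algorithm m j0 alg" and Fs: "\<And>j. j < m \<Longrightarrow> \<exists>p<2. Fs j = F p"
    and c: "(real N + 1) * c\<^sup>2 \<le> 1"
    and gap: "\<epsilon> < \<alpha> * c - \<mu> / 2 * ((real N + 1) * c\<^sup>2) - 2 * \<eta> - \<alpha> * (real N * \<delta>)"
    and wstar: "\<forall>w\<in>Bd d. F_avg wstar \<le> F_avg w"
    and out: "snd (alg d Fs T) \<in> Bd d" "F_avg (snd (alg d Fs T)) - F_avg wstar \<le> \<epsilon>"
  shows "N \<le> T"
proof (rule ccontr)
  assume "\<not> N \<le> T"
  have "j0 < m" and run: "is_run d m Fs T (fst (alg d Fs T))"
    and "snd (alg d Fs T) \<in> lin_span (fst (alg d Fs T) T j0)"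
    using alg unfolding valid_algorithm_def by auto
  then have "snd (alg d Fs T) \<in> vanishing_from (Suc T)"
    using run_vanishing_from[OF run Fs, of T j0] lin_span_vanishing_from by blast
  then have "snd (alg d Fs T) N = 0"
    using \<open>\<not> N \<le> T\<close> unfolding vanishing_from_def by simp
  then have "\<epsilon> < F_avg (snd (alg d Fs T)) - F_avg (plateau c)"
    using F_avg_gap[OF out(1) _ c] gap by linarith
  also have "\<dots> \<le> F_avg (snd (alg d Fs T)) - F_avg wstar"
    using wstar plateau_in_Bd[OF c] by auto
  finally show False
    using out(2) by simp
qed

text \<open>The bound holds whichever machines hold \<open>F 0\<close>.\<close>
lemma hard_pair:
  assumes alg: "valid_algorithm m j0 alg" and "lam \<le> \<mu>"
    and lip: "\<eta> + \<mu> + \<alpha> + 2 * \<alpha> * sqrt (real N + 1) \<le> 1 + lam"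
    and c: "(real N + 1) * c\<^sup>2 \<le> 1"
    and gap: "\<epsilon> < \<alpha> * c - \<mu> / 2 * ((real N + 1) * c\<^sup>2) - 2 * \<eta> - \<alpha> * (real N * \<delta>)"
    and bound: "round_bound lam \<epsilon> \<le> real N + 2"
  shows "strongly_convex_on_ball d lam (F 0) \<and> strongly_convex_on_ball d lam (F 1) \<and>
       lipschitz_on_ball d (1 + lam) (F 0) \<and> lipschitz_on_ball d (1 + lam) (F 1) \<and>
       (\<forall>S T wstar. S \<subseteq> {..<m} \<and> card S = m div 2 \<and>
          wstar \<in> Bd d \<and> (\<forall>w\<in>Bd d. (F 0 wstar + F 1 wstar) / 2 \<le> (F 0 w + F 1 w) / 2) \<and>
          snd (alg d (\<lambda>j. if j \<in> S then F 0 else F 1) T) \<in> Bd d \<and>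
          (F 0 (snd (alg d (\<lambda>j. if j \<in> S then F 0 else F 1) T))
             + F 1 (snd (alg d (\<lambda>j. if j \<in> S then F 0 else F 1) T))) / 2
            - (F 0 wstar + F 1 wstar) / 2 \<le> \<epsilon>
          \<longrightarrow> (if lam = 0 then real T \<ge> 1 / (8 * \<epsilon>) - 2
               else real T \<ge> sqrt (1 / (16 * lam * \<epsilon>)) - 2))"
proof (intro conjI allI impI)
  show "strongly_convex_on_ball d lam (F 0)" "strongly_convex_on_ball d lam (F 1)"
    using F_strongly_convex \<open>lam \<le> \<mu>\<close> by auto
  show "lipschitz_on_ball d (1 + lam) (F 0)" "lipschitz_on_ball d (1 + lam) (F 1)"
    using lipschitz_on_ball_mono[OF lip F_lipschitz] by auto
next
  fix S :: "nat set" and T :: nat and wstar :: vec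
  let ?Fs = "\<lambda>j. if j \<in> S then F 0 else F 1"
  assume "S \<subseteq> {..<m} \<and> card S = m div 2 \<and> wstar \<in> Bd d
    \<and> (\<forall>w\<in>Bd d. (F 0 wstar + F 1 wstar) / 2 \<le> (F 0 w + F 1 w) / 2)
    \<and> snd (alg d ?Fs T) \<in> Bd d
    \<and> (F 0 (snd (alg d ?Fs T)) + F 1 (snd (alg d ?Fs T))) / 2 - (F 0 wstar + F 1 wstar) / 2 \<le> \<epsilon>"
  moreover have "\<exists>p<2. ?Fs j = F p" for j
  proof (cases "j \<in> S")
    case True
    then show ?thesis
      by (intro exI[of _ 0]) simp
  next
    case False
    then show ?thesis
      by (intro exI[of _ 1]) simp
  qed
  ultimately have "N \<le> T"
    using rounds_ge_N[OF alg _ c gap, of ?Fs wstar T] unfolding F_avg_def by blast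
  then show "if lam = 0 then real T \<ge> 1 / (8 * \<epsilon>) - 2 else real T \<ge> sqrt (1 / (16 * lam * \<epsilon>)) - 2"
    using bound unfolding round_bound_def by (simp split: if_splits)
qed

end

section \<open>Choice of the parameters\<close>

definition eps_max :: "real \<Rightarrow> real" where
  "eps_max lam = (if lam = 0 then 1/80 else min (1/80) (min (1 / (1600 * lam)) (lam / 16)))"

lemma eps_max_pos: "0 \<le> lam \<Longrightarrow> 0 < eps_max lam"
  unfolding eps_max_def by auto

lemma round_bound_gt_10:
  assumes "0 \<le> lam" "0 < \<epsilon>" "\<epsilon> < eps_max lam"
  shows "10 < round_bound lam \<epsilon>"
proof (cases "lam = 0")
  case True
  then show ?thesis
    using assms unfolding eps_max_def round_bound_def by (simp add: field_simps)
next
  case False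
  then have "16 * lam * \<epsilon> < 1/100"
    using assms unfolding eps_max_def by (simp add: field_simps)
  then have "sqrt 100 < sqrt (1 / (16 * lam * \<epsilon>))"
    using assms False by (intro real_sqrt_less_mono) (simp add: field_simps)
  then show ?thesis
    using False unfolding round_bound_def by simp
qed

lemma exists_nat_between:
  assumes "10 < x"
  obtains N :: nat where "9 \<le> N" "real N + 1 < x" "x \<le> real N + 2"
proof
  show "9 \<le> nat \<lceil>x\<rceil> - 2" "real (nat \<lceil>x\<rceil> - 2) + 1 < x" "x \<le> real (nat \<lceil>x\<rceil> - 2) + 2"
    using assms ceiling_correct[of x] by (simp_all add: of_nat_diff) linarith+
qed

lemma plateau_gap_strongly_convex:
  fixes lam \<epsilon> P :: real
  assumes "0 < lam" "0 < \<epsilon>" "10 \<le> P" "16 * lam * \<epsilon> * P\<^sup>2 < 1" "1 / 2 \<le> lam * P"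
  defines "c \<equiv> 2 / (5 * sqrt P) / (lam * P)"
  shows "P * c\<^sup>2 \<le> 1" and "\<epsilon> + \<epsilon> / 16 + \<epsilon> / 10 < 2 / (5 * sqrt P) * c - lam / 2 * (P * c\<^sup>2)"
proof -
  have "(1 / 2)\<^sup>2 \<le> (lam * P)\<^sup>2"
    using assms(5) by (rule power_mono) simp
  moreover have "P * c\<^sup>2 = 4 / (25 * (lam * P)\<^sup>2)"
    unfolding c_def using assms(1,3) by (simp add: field_simps power2_eq_square real_sqrt_mult_self)
  ultimately have "P * c\<^sup>2 \<le> 4 / (25 * (1 / 2)\<^sup>2)"
    using assms(1,3) by (auto intro!: divide_left_mono)
  moreover have "4 / (25 * (1 / 2)\<^sup>2) = (16 / 25 :: real)"
    by (simp add: power2_eq_square)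
  ultimately show "P * c\<^sup>2 \<le> 1"
    by linarith
  have "2 / (5 * sqrt P) * c - lam / 2 * (P * c\<^sup>2) = 2 / (25 * lam * P\<^sup>2)"
    unfolding c_def using assms(1,3) by (simp add: field_simps power2_eq_square)
  moreover have "32 * \<epsilon> / 25 < 2 / (25 * lam * P\<^sup>2)"
    using assms(1,3,4) by (simp add: field_simps)
  ultimately show "\<epsilon> + \<epsilon> / 16 + \<epsilon> / 10 < 2 / (5 * sqrt P) * c - lam / 2 * (P * c\<^sup>2)"
    using assms(2) by linarith
qed

text \<open>With \<open>P = N + 1\<close> and \<open>\<alpha> = 2 / (5 * sqrt P)\<close>, the plateau height is \<open>c = 1 / sqrt P\<close>
  (the boundary of the ball) for \<open>lam = 0\<close>, and the unconstrained maximiser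
  \<open>c = \<alpha> / (lam * P)\<close> of \<open>\<alpha> c - lam P c\<^sup>2 / 2\<close> for \<open>lam > 0\<close>.\<close>
lemma plateau_parameters:
  assumes lam: "0 \<le> lam" and \<epsilon>: "0 < \<epsilon>" "\<epsilon> < eps_max lam"
    and P: "10 \<le> P" "P < round_bound lam \<epsilon>" "round_bound lam \<epsilon> \<le> P + 1"
  obtains \<mu> c where "0 < \<mu>" "lam \<le> \<mu>" "\<mu> \<le> lam + \<epsilon> / 4" "P * c\<^sup>2 \<le> 1"
    "\<epsilon> + \<epsilon> / 16 + \<epsilon> / 10 < 2 / (5 * sqrt P) * c - \<mu> / 2 * (P * c\<^sup>2)"
proof (cases "lam = 0")
  case True
  have "8 * \<epsilon> * P < 1"
    using P(2) \<epsilon> True unfolding round_bound_def by (simp add: field_simps)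
  moreover have "2 / (5 * sqrt P) * (1 / sqrt P) = 2 / (5 * P)" "P * (1 / sqrt P)\<^sup>2 = 1"
    using P(1) by (simp_all add: power2_eq_square)
  ultimately show ?thesis
    using True \<epsilon> P(1) by (intro that[of "\<epsilon> / 4" "1 / sqrt P"]) (simp_all add: field_simps)
next
  case False
  then have "0 < lam"
    using lam by simp
  have rb: "round_bound lam \<epsilon> = sqrt (1 / (16 * lam * \<epsilon>))"
    using False unfolding round_bound_def by simp
  have "P\<^sup>2 < 1 / (16 * lam * \<epsilon>)"
    using power_strict_mono[OF P(2), of 2] P(1) \<open>0 < lam\<close> \<epsilon>(1) unfolding rb by simp
  then have "16 * lam * \<epsilon> * P\<^sup>2 < 1"
    using \<open>0 < lam\<close> \<epsilon>(1) by (simp add: field_simps)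
  moreover have "1 / 2 \<le> lam * P"
  proof -
    have "1 / lam \<le> round_bound lam \<epsilon>"
      unfolding rb using \<epsilon> \<open>0 < lam\<close> False
      by (intro real_le_rsqrt) (auto simp: eps_max_def field_simps power2_eq_square)
    then have "1 \<le> lam * round_bound lam \<epsilon>"
      using \<open>0 < lam\<close> by (simp add: field_simps)
    moreover have "lam * round_bound lam \<epsilon> \<le> lam * P + lam"
      using mult_left_mono[OF P(3), of lam] \<open>0 < lam\<close> by (simp add: algebra_simps)
    moreover have "lam \<le> lam * P"
      using P(1) \<open>0 < lam\<close> by simp
    ultimately show ?thesis
      by linarith
  qed
  ultimately show ?thesis
    using plateau_gap_strongly_convex[OF \<open>0 < lam\<close> \<epsilon>(1) P(1)] \<open>0 < lam\<close> \<epsilon>(1)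
    by (intro that[of lam "2 / (5 * sqrt P) / (lam * P)"]) auto
qed

lemma hard_parameters:
  assumes "0 \<le> lam" "0 < \<epsilon>" "\<epsilon> < eps_max lam"
  obtains N :: nat and \<mu> \<alpha> \<delta> \<eta> c :: real
  where "0 < \<mu>" "0 < \<alpha>" "0 < \<delta>" "0 < \<eta>" "lam \<le> \<mu>"
    "\<eta> + \<mu> + \<alpha> + 2 * \<alpha> * sqrt (real N + 1) \<le> 1 + lam"
    "(real N + 1) * c\<^sup>2 \<le> 1"
    "\<epsilon> < \<alpha> * c - \<mu> / 2 * ((real N + 1) * c\<^sup>2) - 2 * \<eta> - \<alpha> * (real N * \<delta>)"
    "round_bound lam \<epsilon> \<le> real N + 2"
proof -
  obtain N :: nat where N: "9 \<le> N" "real N + 1 < round_bound lam \<epsilon>" "round_bound lam \<epsilon> \<le> real N + 2"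
    using exists_nat_between[OF round_bound_gt_10[OF assms]] .
  define P where "P = real N + 1"
  have P: "10 \<le> P" "P < round_bound lam \<epsilon>" "round_bound lam \<epsilon> \<le> P + 1"
    unfolding P_def using N by simp_all
  obtain \<mu> c where \<mu>: "0 < \<mu>" "lam \<le> \<mu>" "\<mu> \<le> lam + \<epsilon> / 4" and c: "P * c\<^sup>2 \<le> 1"
    and gap: "\<epsilon> + \<epsilon> / 16 + \<epsilon> / 10 < 2 / (5 * sqrt P) * c - \<mu> / 2 * (P * c\<^sup>2)"
    using plateau_parameters[OF assms P] .
  define \<alpha> where "\<alpha> = 2 / (5 * sqrt P)"
  have "3 \<le> sqrt P"
    using real_sqrt_le_mono[of 9 P] P(1) by simp
  then have \<alpha>: "0 < \<alpha>" "\<alpha> \<le> 2 / 15" "2 * \<alpha> * sqrt P = 4 / 5"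
    unfolding \<alpha>_def using P(1) by (simp_all add: divide_simps)
  have "\<epsilon> < 1 / 80"
    using assms(3) unfolding eps_max_def by (auto split: if_splits)
  then have "\<epsilon> / 32 + \<mu> + \<alpha> + 2 * \<alpha> * sqrt (real N + 1) \<le> 1 + lam"
    using \<mu> \<alpha> unfolding P_def by linarith
  moreover have "\<alpha> * (real N * (\<epsilon> / (10 * P))) \<le> \<epsilon> / 10"
  proof -
    have "real N * (\<epsilon> / (10 * P)) \<le> \<epsilon> / 10"
      unfolding P_def using assms(2) by (simp add: field_simps)
    moreover have "0 \<le> real N * (\<epsilon> / (10 * P))"
      unfolding P_def using assms(2) by simp
    ultimately show ?thesis
      using mult_left_le_one_le[of "real N * (\<epsilon> / (10 * P))" \<alpha>] \<alpha> by linarith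
  qed
  moreover have "\<epsilon> + \<epsilon> / 16 + \<epsilon> / 10 < \<alpha> * c - \<mu> / 2 * (P * c\<^sup>2)"
    using gap unfolding \<alpha>_def .
  ultimately show ?thesis
    using \<mu> \<alpha>(1) c assms(2) N(3) unfolding P_def
    by (intro that[of \<mu> \<alpha> "\<epsilon> / (10 * (real N + 1))" "\<epsilon> / 32" N c]) simp_all
qed

theorem theorem2:
  fixes m j0 :: nat and alg :: algorithm and lam :: real
  assumes "even m" and "valid_algorithm m j0 alg" and "lam \<ge> 0"
  shows "\<exists>\<epsilon>0>0. \<forall>\<epsilon>::real. 0 < \<epsilon> \<and> \<epsilon> < \<epsilon>0 \<longrightarrow>
    (\<exists>D::nat. \<forall>d\<ge>D. \<exists>F1 F2 :: vec \<Rightarrow> real.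
       strongly_convex_on_ball d lam F1 \<and> strongly_convex_on_ball d lam F2 \<and>
       lipschitz_on_ball d (1 + lam) F1 \<and> lipschitz_on_ball d (1 + lam) F2 \<and>
       (\<forall>S T wstar. S \<subseteq> {..<m} \<and> card S = m div 2 \<and>
          wstar \<in> Bd d \<and> (\<forall>w\<in>Bd d. (F1 wstar + F2 wstar) / 2 \<le> (F1 w + F2 w) / 2) \<and>
          snd (alg d (\<lambda>j. if j \<in> S then F1 else F2) T) \<in> Bd d \<and>
          (F1 (snd (alg d (\<lambda>j. if j \<in> S then F1 else F2) T))
             + F2 (snd (alg d (\<lambda>j. if j \<in> S then F1 else F2) T))) / 2
            - (F1 wstar + F2 wstar) / 2 \<le> \<epsilon>
          \<longrightarrow> (if lam = 0 then real T \<ge> 1 / (8 * \<epsilon>) - 2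
               else real T \<ge> sqrt (1 / (16 * lam * \<epsilon>)) - 2)))"
proof -
  show ?thesis (is "\<exists>\<epsilon>0>0. \<forall>\<epsilon>. _ \<longrightarrow> (\<exists>D. \<forall>d\<ge>D. ?hard_pair_exists \<epsilon> d)")
  proof (rule exI[of _ "eps_max lam"], intro conjI allI impI)
    show "0 < eps_max lam"
      using assms(3) by (rule eps_max_pos)
    fix \<epsilon> :: real
    assume \<epsilon>: "0 < \<epsilon> \<and> \<epsilon> < eps_max lam"
    obtain N \<mu> \<alpha> \<delta> \<eta> c where pos: "0 < \<mu>" "0 < \<alpha>" "0 < \<delta>" "0 < \<eta>"
      and hard: "lam \<le> \<mu>" "\<eta> + \<mu> + \<alpha> + 2 * \<alpha> * sqrt (real N + 1) \<le> 1 + lam"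
        "(real N + 1) * c\<^sup>2 \<le> 1"
        "\<epsilon> < \<alpha> * c - \<mu> / 2 * ((real N + 1) * c\<^sup>2) - 2 * \<eta> - \<alpha> * (real N * \<delta>)"
        "round_bound lam \<epsilon> \<le> real N + 2"
      using hard_parameters[OF assms(3) conjunct1[OF \<epsilon>] conjunct2[OF \<epsilon>]] .
    show "\<exists>D. \<forall>d\<ge>D. ?hard_pair_exists \<epsilon> d"
    proof (intro exI[of _ "Suc N"] allI impI)
      fix d :: nat
      assume "Suc N \<le> d"
      then interpret hard_instance d N \<mu> \<alpha> \<delta> \<eta>
        using pos by unfold_locales auto
      show "?hard_pair_exists \<epsilon> d"
        by (rule exI, rule exI, rule hard_pair[OF assms(2) hard])
    qed
  qed
qed

end
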